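(* Let $a=b=p$ and $0\le c<p$, and let $r\ge p/2$. Then the optimal DMT of the half-duplex $(a,b,c)$-relay channel, even when the relay has global CSI, is at most $(p+c-2r)^+$, which equals the DMT $d_{QMF}(r)$ achieved by static QMF with equal listening and transmitting times. Consequently static QMF is DMT optimal for $r\ge p/2$ (under global CSI, and hence also under CSIR only).
   Context: The $(a,b,c)$-relay channel: source $S$, half-duplex relay $R$, destination $D$; source signal broadcast to $R$ and $D$, superposition at $D$; i.i.d. $\mathcal{CN}(0,1)$ quasi-static gains; average SNRs $\rho^a,\rho^b,\rho^c$ on S-R, R-D, S-D. Exponential orders $\alpha,\beta,\gamma$ of $|h_{sr}|^2\rho^a,|h_{rd}|^2\rho^b,|h_{sd}|^2\rho^c$ (e.g. $\alpha=\lim_{\rho\to\infty}\log(1+|h_{sr}|^2\rho^a)/\log\rho$). Let $r_{h.d.}(t)=\min\{t\max(\alpha,\gamma)+(1-t)\gamma,\ t\gamma+(1-t)\max(\beta,\gamma)\}$. The global-CSI DMT satisfies $d_{G\text{-}CSI}(r)\le\inf\{a+b+c-\alpha-\beta-\gamma:\max_{t\in[0,1]}r_{h.d.}(t)\le r,\ \alpha\in[0,a],\beta\in[0,b],\gamma\in[0,c]\}$. Static QMF: the relay listens for half the block, quantizes at noise level, maps to a random codeword and transmits in the other half; its DMT is $d_{QMF}(r)=\min\{a+b+c-\alpha-\beta-\gamma: r_{h.d.}(1/2)\le r,\ \alpha\in[0,a],\beta\in[0,b],\gamma\in[0,c]\}$, which for $c\le\min(a,b)$ equals $(\min(a,b)+c-2r)^+$.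 $x^+=\max(x,0)$. *)

theory Defs
  imports Complex_Main
begin

text \<open>Half-duplex achievable multiplexing gain r_{h.d.}(t) for exponential orders
  alpha, beta, gamma and listening fraction t.\<close>
definition rhd :: "real \<Rightarrow> real \<Rightarrow> real \<Rightarrow> real \<Rightarrow> real" where
  "rhd \<alpha> \<beta> \<gamma> t = min (t * max \<alpha> \<gamma> + (1 - t) * \<gamma>) (t * \<gamma> + (1 - t) * max \<beta> \<gamma>)"

definition dmt_gcsi_bound :: "real \<Rightarrow> real \<Rightarrow> real \<Rightarrow> real \<Rightarrow> real" where
  "dmt_gcsi_bound a b c r = Inf {a + b + c - \<alpha> - \<beta> - \<gamma> | \<alpha> \<beta> \<gamma>.
      (SUP t\<in>{0..1}. rhd \<alpha> \<beta> \<gamma> t) \<le> r \<and>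
      \<alpha> \<in> {0..a} \<and> \<beta> \<in> {0..b} \<and> \<gamma> \<in> {0..c}}"

definition d_qmf :: "real \<Rightarrow> real \<Rightarrow> real \<Rightarrow> real \<Rightarrow> real" where
  "d_qmf a b c r = Inf {a + b + c - \<alpha> - \<beta> - \<gamma> | \<alpha> \<beta> \<gamma>.
      rhd \<alpha> \<beta> \<gamma> (1/2) \<le> r \<and>
      \<alpha> \<in> {0..a} \<and> \<beta> \<in> {0..b} \<and> \<gamma> \<in> {0..c}}"

end

theory Submission
  imports Defs
begin

text \<open>At the outage point \<open>\<alpha> = \<beta> = p\<close>, \<open>\<gamma> = min c (2r - p)\<close> the two terms of the
  minimum in \<open>rhd p p \<gamma> t\<close> sum to \<open>p + \<gamma>\<close> for every listening fraction \<open>t\<close>, so no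
  schedule supports a rate above \<open>(p + \<gamma>)/2 \<le> r\<close>, while this outage costs only
  \<open>c - \<gamma> = (p + c - 2r)\<^sup>+\<close>. Static QMF (\<open>t = 1/2\<close>) is in outage only if \<open>\<alpha> + \<gamma> \<le> 2r\<close>
  or \<open>\<beta> + \<gamma> \<le> 2r\<close>, which costs at least \<open>(min a b + c - 2r)\<^sup>+\<close>, and for
  \<open>c \<le> min a b\<close> this cost is attained.\<close>

lemma rhd_symmetric_le_midpoint: "rhd \<alpha> \<alpha> \<gamma> t \<le> (max \<alpha> \<gamma> + \<gamma>) / 2"
proof -
  define m where "m = max \<alpha> \<gamma>"
  have "rhd \<alpha> \<alpha> \<gamma> t = min (t * m + (1 - t) * \<gamma>) (t * \<gamma> + (1 - t) * m)"
    unfolding rhd_def m_def ..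
  also have "\<dots> \<le> ((t * m + (1 - t) * \<gamma>) + (t * \<gamma> + (1 - t) * m)) / 2"
    unfolding min_le_iff_disj by argo
  also have "\<dots> = (m + \<gamma>) / 2"
    by (simp add: algebra_simps)
  finally show ?thesis
    unfolding m_def .
qed

lemma rhd_half: "rhd \<alpha> \<beta> \<gamma> (1/2) = (min (max \<alpha> \<gamma>) (max \<beta> \<gamma>) + \<gamma>) / 2"
  unfolding rhd_def by (simp add: min_def)

lemma dmt_gcsi_bound_le:
  assumes "(SUP t\<in>{0..1}. rhd \<alpha> \<beta> \<gamma> t) \<le> r"
    and "\<alpha> \<in> {0..a}" "\<beta> \<in> {0..b}" "\<gamma> \<in> {0..c}"
  shows "dmt_gcsi_bound a b c r \<le> a + b + c - \<alpha> - \<beta> - \<gamma>"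
  unfolding dmt_gcsi_bound_def
proof (rule cInf_lower)
  show "bdd_below {a + b + c - \<alpha> - \<beta> - \<gamma> | \<alpha> \<beta> \<gamma>.
      (SUP t\<in>{0..1}. rhd \<alpha> \<beta> \<gamma> t) \<le> r \<and> \<alpha> \<in> {0..a} \<and> \<beta> \<in> {0..b} \<and> \<gamma> \<in> {0..c}}"
    by (rule bdd_belowI[of _ 0]) auto
qed (use assms in blast)

lemma d_qmf_le:
  assumes "rhd \<alpha> \<beta> \<gamma> (1/2) \<le> r"
    and "\<alpha> \<in> {0..a}" "\<beta> \<in> {0..b}" "\<gamma> \<in> {0..c}"
  shows "d_qmf a b c r \<le> a + b + c - \<alpha> - \<beta> - \<gamma>"
  unfolding d_qmf_def
proof (rule cInf_lower)
  show "bdd_below {a + b + c - \<alpha> - \<beta> - \<gamma> | \<alpha> \<beta> \<gamma>.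
      rhd \<alpha> \<beta> \<gamma> (1/2) \<le> r \<and> \<alpha> \<in> {0..a} \<and> \<beta> \<in> {0..b} \<and> \<gamma> \<in> {0..c}}"
    by (rule bdd_belowI[of _ 0]) auto
qed (use assms in blast)

lemma d_qmf_commute: "d_qmf a b c r = d_qmf b a c r"
proof -
  define F where "F a b = {a + b + c - \<alpha> - \<beta> - \<gamma> | \<alpha> \<beta> \<gamma>.
      rhd \<alpha> \<beta> \<gamma> (1/2) \<le> r \<and> \<alpha> \<in> {0..a} \<and> \<beta> \<in> {0..b} \<and> \<gamma> \<in> {0..c}}" for a b
  have rhd_half_commute: "rhd \<alpha> \<beta> \<gamma> (1/2) = rhd \<beta> \<alpha> \<gamma> (1/2)" for \<alpha> \<beta> \<gamma>
    unfolding rhd_half by (simp add: min.commute)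
  have "F a b \<subseteq> F b a" for a b
  proof
    fix x
    assume "x \<in> F a b"
    then obtain \<alpha> \<beta> \<gamma> where "x = a + b + c - \<alpha> - \<beta> - \<gamma>" "rhd \<alpha> \<beta> \<gamma> (1/2) \<le> r"
      "\<alpha> \<in> {0..a}" "\<beta> \<in> {0..b}" "\<gamma> \<in> {0..c}"
      unfolding F_def by blast
    then show "x \<in> F b a"
      unfolding F_def using rhd_half_commute[of \<alpha> \<beta> \<gamma>]
      by (intro CollectI exI[of _ \<beta>] exI[of _ \<alpha>] exI[of _ \<gamma>]) auto
  qed
  then have "F a b = F b a"
    by blast
  then show ?thesis
    unfolding d_qmf_def F_def by simp
qed

lemma d_qmf_ge:
  assumes "0 \<le> a" "0 \<le> b" "0 \<le> c" "0 \<le> r"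
  shows "max (min a b + c - 2 * r) 0 \<le> d_qmf a b c r"
  unfolding d_qmf_def
proof (rule cInf_greatest)
  show "{a + b + c - \<alpha> - \<beta> - \<gamma> | \<alpha> \<beta> \<gamma>.
      rhd \<alpha> \<beta> \<gamma> (1/2) \<le> r \<and> \<alpha> \<in> {0..a} \<and> \<beta> \<in> {0..b} \<and> \<gamma> \<in> {0..c}} \<noteq> {}"
    using assms rhd_half[of 0 0 0] by fastforce
next
  fix x
  assume "x \<in> {a + b + c - \<alpha> - \<beta> - \<gamma> | \<alpha> \<beta> \<gamma>.
      rhd \<alpha> \<beta> \<gamma> (1/2) \<le> r \<and> \<alpha> \<in> {0..a} \<and> \<beta> \<in> {0..b} \<and> \<gamma> \<in> {0..c}}"
  then obtain \<alpha> \<beta> \<gamma> where x: "x = a + b + c - \<alpha> - \<beta> - \<gamma>"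
    and outage: "rhd \<alpha> \<beta> \<gamma> (1/2) \<le> r"
    and ranges: "\<alpha> \<in> {0..a}" "\<beta> \<in> {0..b}" "\<gamma> \<in> {0..c}"
    by blast
  have "\<alpha> + \<gamma> \<le> 2 * r \<or> \<beta> + \<gamma> \<le> 2 * r"
    using outage unfolding rhd_half by (auto simp: min_def max_def split: if_splits)
  then show "max (min a b + c - 2 * r) 0 \<le> x"
    using x ranges by auto
qed

lemma d_qmf_eq:
  assumes "0 \<le> c" "c \<le> min a b" "0 \<le> r"
  shows "d_qmf a b c r = max (min a b + c - 2 * r) 0"
proof (rule antisym)
  show "max (min a b + c - 2 * r) 0 \<le> d_qmf a b c r"
    using assms by (intro d_qmf_ge) auto
  have ordered: "d_qmf a b c r \<le> max (a + c - 2 * r) 0" if "a \<le> b" "c \<le> a" for a b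
  proof (cases "a + c \<le> 2 * r")
    case True
    have "rhd a b c (1/2) \<le> r"
      using True that assms unfolding rhd_half by (simp add: min_def max_def)
    then show ?thesis
      using d_qmf_le[of a b c r a b c] True that assms by auto
  next
    case False
    \<comment> \<open>Spend the budget \<open>2r\<close> on \<open>\<alpha> + \<gamma>\<close> with \<open>\<gamma> \<le> \<alpha>\<close>, so that \<open>max \<alpha> \<gamma> + \<gamma> = 2r\<close>.\<close>
    define \<gamma> where "\<gamma> = min c r"
    have "rhd (2 * r - \<gamma>) b \<gamma> (1/2) \<le> r"
      unfolding rhd_half \<gamma>_def by (simp add: min_def max_def)
    moreover have "2 * r - \<gamma> \<in> {0..a}" "\<gamma> \<in> {0..c}"
      using False that assms by (auto simp: \<gamma>_def)
    ultimately show ?thesis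
      using d_qmf_le[of "2 * r - \<gamma>" b \<gamma> r a b c] False that assms by auto
  qed
  show "d_qmf a b c r \<le> max (min a b + c - 2 * r) 0"
  proof (cases "a \<le> b")
    case True
    then show ?thesis
      using ordered[of a b] assms by simp
  next
    case False
    then show ?thesis
      using ordered[of b a] assms d_qmf_commute[of a b c r] by simp
  qed
qed

lemma dmt_gcsi_bound_symmetric_le:
  assumes "0 \<le> c" "c \<le> p" "p \<le> 2 * r"
  shows "dmt_gcsi_bound p p c r \<le> max (p + c - 2 * r) 0"
proof -
  define \<gamma> where "\<gamma> = min c (2 * r - p)"
  have \<gamma>: "\<gamma> \<in> {0..c}" "\<gamma> \<le> p" "p + \<gamma> \<le> 2 * r"
    using assms by (auto simp: \<gamma>_def)
  have "(SUP t\<in>{0..1}. rhd p p \<gamma> t) \<le> r"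
  proof (rule cSUP_least)
    fix t
    show "rhd p p \<gamma> t \<le> r"
      using rhd_symmetric_le_midpoint[of p \<gamma> t] \<gamma> by simp
  qed simp
  then have "dmt_gcsi_bound p p c r \<le> p + p + c - p - p - \<gamma>"
    using assms \<gamma> by (intro dmt_gcsi_bound_le) auto
  also have "\<dots> = max (p + c - 2 * r) 0"
    by (simp add: \<gamma>_def)
  finally show ?thesis .
qed

theorem lemma5:
  fixes p c r :: real
  assumes "0 \<le> c" and "c < p" and "p / 2 \<le> r"
  shows "dmt_gcsi_bound p p c r \<le> max (p + c - 2 * r) 0
         \<and> d_qmf p p c r = max (p + c - 2 * r) 0"
proof
  show "dmt_gcsi_bound p p c r \<le> max (p + c - 2 * r) 0"
    using assms by (intro dmt_gcsi_bound_symmetric_le) auto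
  show "d_qmf p p c r = max (p + c - 2 * r) 0"
    using assms d_qmf_eq[of c p p r] by simp
qed

end
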